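(* Let $M^2$ be a minimal surface of general type in $\mathbb R^4$, parameterized by semi-canonical parameters $(u,v)$, and satisfying $\gamma_1=0$ identically. Then the function $G\sqrt{|\mu^2-\nu^2|}$ does not depend on $u$.
   Context: $\mathbb R^4$ carries the standard metric $g=\langle\cdot,\cdot\rangle$ and flat connection $\nabla'$; everything is smooth and local. For a regular surface $M^2: z=z(u,v)$ let $E,F,G$ be the first fundamental form coefficients, $\sigma$ the second fundamental form, $K$ the Gauss curvature, and $\varkappa$ the curvature of the normal connection, $\varkappa=g(R^\perp(x,y)n_2,n_1)$ for a positively oriented orthonormal frame $(x,y,n_1,n_2)$ with $x,y$ tangent. Minimal means $\sigma(x,x)+\sigma(y,y)=0$ for orthonormal tangent $x,y$. A minimal surface is of general type if $K^2-\varkappa^2>0$ and $\varkappa\neq0$ everywhere. The ellipse of curvature at $p$ is $\{\sigma(v,v): v\in T_pM^2,\ |v|=1\}$; a tangent line is canonical if it is collinear with an axis of this ellipse. The geometric frame is a positively oriented orthonormal frame $\{x,y,n_1,n_2\}$ with $x,y$ canonical tangent fields and $n_1,n_2$ normal, satisfying $\nabla'_xx=\gamma_1y+\nu n_1$, $\nabla'_xy=-\gamma_1x+\mu n_2$, $\nabla'_yx=-\gamma_2y+\mu n_2$, $\nabla'_yy=\gamma_2x-\nu n_1$, $\nabla'_xn_1=-\nu x+\beta_1n_2$, $\nabla'_yn_1=\nu y+\beta_2n_2$, $\nabla'_xn_2=-\mu y-\beta_1n_1$, $\nabla'_yn_2=-\mu x-\beta_2n_1$, with $\mu>0$, $\nu\ne0$,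 $\mu^2\ne\nu^2$; the functions $\nu,\mu,\gamma_1,\gamma_2,\beta_1,\beta_2$ are the invariants of $M^2$. Parameters $(u,v)$ are semi-canonical if the parametric lines are integral curves of the canonical tangents, with $F=0$, $x=z_u/\sqrt E$, $y=z_v/\sqrt G$; then $\gamma_1=-y(\ln\sqrt E)$, $\gamma_2=-x(\ln\sqrt G)$. *)

theory Defs
  imports "HOL-Analysis.Analysis"
begin

type_synonym vec4 = "real^4"

definition pu :: "(real \<times> real \<Rightarrow> 'a::real_normed_vector) \<Rightarrow> real \<times> real \<Rightarrow> 'a" where
  "pu f p = vector_derivative (\<lambda>t. f (t, snd p)) (at (fst p))"

definition pv :: "(real \<times> real \<Rightarrow> 'a::real_normed_vector) \<Rightarrow> real \<times> real \<Rightarrow> 'a" where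
  "pv f p = vector_derivative (\<lambda>t. f (fst p, t)) (at (snd p))"

fun dpart :: "bool list \<Rightarrow> (real \<times> real \<Rightarrow> 'a::real_normed_vector) \<Rightarrow> real \<times> real \<Rightarrow> 'a" where
  "dpart [] f = f"
| "dpart (b # bs) f = (if b then pu (dpart bs f) else pv (dpart bs f))"

definition smooth_on :: "(real \<times> real) set \<Rightarrow> (real \<times> real \<Rightarrow> 'a::real_normed_vector) \<Rightarrow> bool" where
  "smooth_on U f \<longleftrightarrow>
     (\<forall>bs. continuous_on U (dpart bs f) \<and>
        (\<forall>p\<in>U. (\<lambda>t. dpart bs f (t, snd p)) differentiable (at (fst p)) \<and>
                (\<lambda>t. dpart bs f (fst p, t)) differentiable (at (snd p))))"

definition EE :: "(real \<times> real \<Rightarrow> vec4) \<Rightarrow> real \<times> real \<Rightarrow> real" where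
  "EE z p = pu z p \<bullet> pu z p"
definition FF :: "(real \<times> real \<Rightarrow> vec4) \<Rightarrow> real \<times> real \<Rightarrow> real" where
  "FF z p = pu z p \<bullet> pv z p"
definition GG :: "(real \<times> real \<Rightarrow> vec4) \<Rightarrow> real \<times> real \<Rightarrow> real" where
  "GG z p = pv z p \<bullet> pv z p"

definition regular_surface :: "(real \<times> real) set \<Rightarrow> (real \<times> real \<Rightarrow> vec4) \<Rightarrow> bool" where
  "regular_surface U z \<longleftrightarrow> open U \<and> smooth_on U z \<and>
     (\<forall>p\<in>U. EE z p * GG z p - (FF z p)^2 > 0)"

text \<open>Unit tangent fields along the parametric lines (for orthogonal parameters, F = 0).\<close>
definition xu :: "(real \<times> real \<Rightarrow> vec4) \<Rightarrow> real \<times> real \<Rightarrow> vec4" where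
  "xu z p = (1 / sqrt (EE z p)) *\<^sub>R pu z p"
definition yv :: "(real \<times> real \<Rightarrow> vec4) \<Rightarrow> real \<times> real \<Rightarrow> vec4" where
  "yv z p = (1 / sqrt (GG z p)) *\<^sub>R pv z p"

text \<open>Flat derivative of a field X along xu resp. yv: nabla'_x X = X_u / sqrt E, nabla'_y X = X_v / sqrt G.\<close>
definition Dx :: "(real \<times> real \<Rightarrow> vec4) \<Rightarrow> (real \<times> real \<Rightarrow> 'a::real_normed_vector) \<Rightarrow> real \<times> real \<Rightarrow> 'a" where
  "Dx z X p = (1 / sqrt (EE z p)) *\<^sub>R pu X p"
definition Dy :: "(real \<times> real \<Rightarrow> vec4) \<Rightarrow> (real \<times> real \<Rightarrow> 'a::real_normed_vector) \<Rightarrow> real \<times> real \<Rightarrow> 'a" where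
  "Dy z X p = (1 / sqrt (GG z p)) *\<^sub>R pv X p"

text \<open>Normal component of a vector at p (orthogonal parameters).\<close>
definition nrm :: "(real \<times> real \<Rightarrow> vec4) \<Rightarrow> real \<times> real \<Rightarrow> vec4 \<Rightarrow> vec4" where
  "nrm z p w = w - (w \<bullet> xu z p) *\<^sub>R xu z p - (w \<bullet> yv z p) *\<^sub>R yv z p"

text \<open>Minimality: sigma(x,x) + sigma(y,y) = 0, sigma(X,Y) = normal part of nabla'_X Y.\<close>
definition minimal_surface :: "(real \<times> real) set \<Rightarrow> (real \<times> real \<Rightarrow> vec4) \<Rightarrow> bool" where
  "minimal_surface U z \<longleftrightarrow>
     (\<forall>p\<in>U. nrm z p (Dx z (xu z) p) + nrm z p (Dy z (yv z) p) = 0)"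

text \<open>Gauss curvature for orthogonal parameters (F = 0), intrinsic formula.\<close>
definition gauss_curv :: "(real \<times> real \<Rightarrow> vec4) \<Rightarrow> real \<times> real \<Rightarrow> real" where
  "gauss_curv z p = - 1 / (2 * sqrt (EE z p * GG z p)) *
     (pv (\<lambda>q. pv (EE z) q / sqrt (EE z q * GG z q)) p
      + pu (\<lambda>q. pu (GG z) q / sqrt (EE z q * GG z q)) p)"

text \<open>Normal connection along coordinate fields and normal curvature
  kappa = g(R_perp(x,y) n2, n1), with R_perp(z_u,z_v) = D_u D_v - D_v D_u (coordinate fields commute)
  and R_perp(x,y) = R_perp(z_u,z_v) / sqrt(E G).\<close>
definition Nu :: "(real \<times> real \<Rightarrow> vec4) \<Rightarrow> (real \<times> real \<Rightarrow> vec4) \<Rightarrow> real \<times> real \<Rightarrow> vec4" where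
  "Nu z \<xi> p = nrm z p (pu \<xi> p)"
definition Nv :: "(real \<times> real \<Rightarrow> vec4) \<Rightarrow> (real \<times> real \<Rightarrow> vec4) \<Rightarrow> real \<times> real \<Rightarrow> vec4" where
  "Nv z \<xi> p = nrm z p (pv \<xi> p)"

definition normal_curv :: "(real \<times> real \<Rightarrow> vec4) \<Rightarrow> (real \<times> real \<Rightarrow> vec4) \<Rightarrow> (real \<times> real \<Rightarrow> vec4)
    \<Rightarrow> real \<times> real \<Rightarrow> real" where
  "normal_curv z n1 n2 p =
     ((Nu z (Nv z n2) p - Nv z (Nu z n2) p) \<bullet> n1 p) / sqrt (EE z p * GG z p)"

definition pos_orthonormal :: "vec4 \<Rightarrow> vec4 \<Rightarrow> vec4 \<Rightarrow> vec4 \<Rightarrow> bool" where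
  "pos_orthonormal a b c d \<longleftrightarrow>
     (\<forall>e\<in>{a,b,c,d}. e \<bullet> e = 1) \<and>
     a \<bullet> b = 0 \<and> a \<bullet> c = 0 \<and> a \<bullet> d = 0 \<and> b \<bullet> c = 0 \<and> b \<bullet> d = 0 \<and> c \<bullet> d = 0 \<and>
     det (vector [a, b, c, d] :: real^4^4) > 0"

text \<open>The geometric frame {x,y,n1,n2} with invariants nu, mu, gamma1, gamma2, beta1, beta2,
  where x = z_u/sqrt E and y = z_v/sqrt G (semi-canonical parameters).\<close>
definition geometric_frame ::
  "(real \<times> real) set \<Rightarrow> (real \<times> real \<Rightarrow> vec4) \<Rightarrow> (real \<times> real \<Rightarrow> vec4) \<Rightarrow> (real \<times> real \<Rightarrow> vec4)
   \<Rightarrow> (real \<times> real \<Rightarrow> real) \<Rightarrow> (real \<times> real \<Rightarrow> real) \<Rightarrow> (real \<times> real \<Rightarrow> real)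
   \<Rightarrow> (real \<times> real \<Rightarrow> real) \<Rightarrow> (real \<times> real \<Rightarrow> real) \<Rightarrow> (real \<times> real \<Rightarrow> real) \<Rightarrow> bool" where
  "geometric_frame U z n1 n2 \<nu> \<mu> \<gamma>1 \<gamma>2 \<beta>1 \<beta>2 \<longleftrightarrow>
    smooth_on U n1 \<and> smooth_on U n2 \<and>
    smooth_on U \<nu> \<and> smooth_on U \<mu> \<and> smooth_on U \<gamma>1 \<and> smooth_on U \<gamma>2 \<and>
    smooth_on U \<beta>1 \<and> smooth_on U \<beta>2 \<and>
    (\<forall>p\<in>U. let x = xu z; y = yv z in
       pos_orthonormal (x p) (y p) (n1 p) (n2 p) \<and>
       Dx z x p = \<gamma>1 p *\<^sub>R y p + \<nu> p *\<^sub>R n1 p \<and>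
       Dx z y p = - \<gamma>1 p *\<^sub>R x p + \<mu> p *\<^sub>R n2 p \<and>
       Dy z x p = - \<gamma>2 p *\<^sub>R y p + \<mu> p *\<^sub>R n2 p \<and>
       Dy z y p = \<gamma>2 p *\<^sub>R x p - \<nu> p *\<^sub>R n1 p \<and>
       Dx z n1 p = - \<nu> p *\<^sub>R x p + \<beta>1 p *\<^sub>R n2 p \<and>
       Dy z n1 p = \<nu> p *\<^sub>R y p + \<beta>2 p *\<^sub>R n2 p \<and>
       Dx z n2 p = - \<mu> p *\<^sub>R y p - \<beta>1 p *\<^sub>R n1 p \<and>
       Dy z n2 p = - \<mu> p *\<^sub>R x p - \<beta>2 p *\<^sub>R n1 p \<and>
       \<mu> p > 0 \<and> \<nu> p \<noteq> 0 \<and> (\<mu> p)^2 \<noteq> (\<nu> p)^2)"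

end

theory Submission imports Defs begin

(* For semi-canonical (orthogonal) parameters the frame equations say that the
   second derivatives of z have prescribed normal parts:  z_uu.n2 = 0,  z_uv.n2 = sqrt(EG) mu,
   z_uv.n1 = 0,  z_vv.n1 = -G nu.  Differentiating the two identities for z_uv.n2 and z_vv.n1
   with respect to u, using symmetry of mixed partial derivatives and the derivatives of the
   normals prescribed by the frame, yields the Codazzi-type formulas
       mu_u = sqrt E beta2 nu - mu G_u / G,       nu_u = sqrt E beta2 mu - nu G_u / G,
   from which  (G^2 (mu^2 - nu^2))_u = 0.  On the rectangle U this function is therefore
   constant along every u-line, and G sqrt|mu^2 - nu^2| is its square root.
   The computation only uses the frame equations in orthogonal parameters: minimality, the
   general-type condition and gamma1 = 0 are hypotheses of the theorem not needed for it. *)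

subsection \<open>Partial derivatives of smooth functions\<close>

lemma dpart_pu: "dpart bs (pu f) = dpart (bs @ [True]) f"
  by (induction bs) auto

lemma dpart_pv: "dpart bs (pv f) = dpart (bs @ [False]) f"
  by (induction bs) auto

lemma smooth_on_pu: "smooth_on U f \<Longrightarrow> smooth_on U (pu f)"
  unfolding smooth_on_def dpart_pu by blast

lemma smooth_on_pv: "smooth_on U f \<Longrightarrow> smooth_on U (pv f)"
  unfolding smooth_on_def dpart_pv by blast

lemma smooth_on_continuous: "smooth_on U f \<Longrightarrow> continuous_on U f"
  unfolding smooth_on_def by (metis dpart.simps(1))

lemma smooth_on_has_pu:
  "smooth_on U f \<Longrightarrow> (u, v) \<in> U \<Longrightarrow> ((\<lambda>t. f (t, v)) has_vector_derivative pu f (u, v)) (at u)"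
  unfolding smooth_on_def pu_def by (metis dpart.simps(1) vector_derivative_works fst_conv snd_conv)

lemma smooth_on_has_pv:
  "smooth_on U f \<Longrightarrow> (u, v) \<in> U \<Longrightarrow> ((\<lambda>t. f (u, t)) has_vector_derivative pv f (u, v)) (at v)"
  unfolding smooth_on_def pv_def by (metis dpart.simps(1) vector_derivative_works fst_conv snd_conv)

lemma smooth_on_has_real_pu:
  fixes f :: "real \<times> real \<Rightarrow> real"
  shows "smooth_on U f \<Longrightarrow> (u, v) \<in> U \<Longrightarrow> ((\<lambda>t. f (t, v)) has_real_derivative pu f (u, v)) (at u)"
  using smooth_on_has_pu by (simp add: has_real_derivative_iff_has_vector_derivative)

lemma pu_eqI:
  fixes f :: "real \<times> real \<Rightarrow> real"
  shows "((\<lambda>t. f (t, v)) has_real_derivative D) (at u) \<Longrightarrow> pu f (u, v) = D"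
  by (simp add: pu_def has_real_derivative_iff_has_vector_derivative vector_derivative_at)

lemma pv_eqI:
  fixes f :: "real \<times> real \<Rightarrow> real"
  shows "((\<lambda>t. f (u, t)) has_real_derivative D) (at v) \<Longrightarrow> pv f (u, v) = D"
  by (simp add: pv_def has_real_derivative_iff_has_vector_derivative vector_derivative_at)

text \<open>Partial derivatives are local: functions agreeing on an open set have the same partial
  derivatives there (no differentiability is needed, since both sides are defined by choice from
  the same local property).\<close>

lemma vector_derivative_cong_open:
  assumes "open S" "x \<in> S" "\<And>y. y \<in> S \<Longrightarrow> f y = g y"
  shows "vector_derivative f (at x) = vector_derivative g (at x)"
proof -
  have "(f has_vector_derivative D) (at x) \<longleftrightarrow> (g has_vector_derivative D) (at x)" for D
    using assms has_vector_derivative_transform_within_open[of _ D x S] by metis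
  then show ?thesis unfolding vector_derivative_def by simp
qed

lemma pu_cong_open:
  assumes "open U" "p \<in> U" "\<And>q. q \<in> U \<Longrightarrow> f q = g q"
  shows "pu f p = pu g p"
proof -
  have "open {t. (t, snd p) \<in> U}"
    using assms(1) by (intro open_vimage[where f = "\<lambda>t. (t, snd p)", unfolded vimage_def])
       (auto intro!: continuous_intros)
  then show ?thesis
    unfolding pu_def using assms by (intro vector_derivative_cong_open) auto
qed

lemma pv_cong_open:
  assumes "open U" "p \<in> U" "\<And>q. q \<in> U \<Longrightarrow> f q = g q"
  shows "pv f p = pv g p"
proof -
  have "open {t. (fst p, t) \<in> U}"
    using assms(1) by (intro open_vimage[where f = "\<lambda>t. (fst p, t)", unfolded vimage_def])
       (auto intro!: continuous_intros)
  then show ?thesis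
    unfolding pv_def using assms by (intro vector_derivative_cong_open) auto
qed

lemma pv_const_zero: "pv (\<lambda>q. c) p = 0"
  by (simp add: pv_def)

lemma has_real_derivative_inner:
  assumes "(f has_vector_derivative f') (at t)" "(g has_vector_derivative g') (at t)"
  shows "((\<lambda>s. f s \<bullet> g s) has_real_derivative (f' \<bullet> g t + f t \<bullet> g')) (at t)"
  unfolding has_real_derivative_iff_has_vector_derivative has_vector_derivative_def
  by (rule has_derivative_eq_rhs[OF has_derivative_inner[OF assms[unfolded has_vector_derivative_def]]])
     (auto simp: fun_eq_iff algebra_simps inner_commute)

lemma has_real_derivative_inner_const:
  "(f has_vector_derivative f') (at t) \<Longrightarrow> ((\<lambda>s. f s \<bullet> w) has_real_derivative (f' \<bullet> w)) (at t)"
  using has_real_derivative_inner[OF _ has_vector_derivative_const[of w]] by simp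

lemma has_real_pu_inner:
  assumes "smooth_on U f" "smooth_on U g" "(u, v) \<in> U"
  shows "((\<lambda>t. f (t, v) \<bullet> g (t, v)) has_real_derivative
           (pu f (u, v) \<bullet> g (u, v) + f (u, v) \<bullet> pu g (u, v))) (at u)"
  using has_real_derivative_inner[OF smooth_on_has_pu[OF assms(1,3)] smooth_on_has_pu[OF assms(2,3)]]
  by simp

lemma pu_inner:
  assumes "smooth_on U f" "smooth_on U g" "(u, v) \<in> U"
  shows "pu (\<lambda>q. f q \<bullet> g q) (u, v) = pu f (u, v) \<bullet> g (u, v) + f (u, v) \<bullet> pu g (u, v)"
  using pu_eqI[OF has_real_pu_inner[OF assms]] .

lemma pv_inner:
  assumes "smooth_on U f" "smooth_on U g" "(u, v) \<in> U"
  shows "pv (\<lambda>q. f q \<bullet> g q) (u, v) = pv f (u, v) \<bullet> g (u, v) + f (u, v) \<bullet> pv g (u, v)"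
  using has_real_derivative_inner[OF smooth_on_has_pv[OF assms(1,3)] smooth_on_has_pv[OF assms(2,3)]]
  by (rule pv_eqI)

subsection \<open>Symmetry of mixed partial derivatives\<close>

lemma mixed_difference_mean_value:
  fixes \<phi> \<phi>u \<phi>uv :: "real \<times> real \<Rightarrow> real"
  assumes h: "h > 0"
    and du: "\<And>s t. s \<in> {u..u+h} \<Longrightarrow> t \<in> {v..v+h} \<Longrightarrow>
               ((\<lambda>s. \<phi> (s, t)) has_real_derivative \<phi>u (s, t)) (at s)"
    and duv: "\<And>s t. s \<in> {u..u+h} \<Longrightarrow> t \<in> {v..v+h} \<Longrightarrow>
               ((\<lambda>t. \<phi>u (s, t)) has_real_derivative \<phi>uv (s, t)) (at t)"
  obtains s t where "s \<in> {u<..<u+h}" "t \<in> {v<..<v+h}"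
    "\<phi> (u+h, v+h) - \<phi> (u+h, v) - \<phi> (u, v+h) + \<phi> (u, v) = h * h * \<phi>uv (s, t)"
proof -
  have "\<exists>s>u. s < u + h \<and> (\<phi> (u+h, v+h) - \<phi> (u+h, v)) - (\<phi> (u, v+h) - \<phi> (u, v))
          = (u + h - u) * (\<phi>u (s, v+h) - \<phi>u (s, v))"
    using h by (intro MVT2[where f = "\<lambda>s. \<phi> (s, v+h) - \<phi> (s, v)"])
      (auto intro!: derivative_eq_intros du)
  then obtain s where s: "s \<in> {u<..<u+h}"
    and \<Delta>: "\<phi> (u+h, v+h) - \<phi> (u+h, v) - \<phi> (u, v+h) + \<phi> (u, v) = h * (\<phi>u (s, v+h) - \<phi>u (s, v))"
    by (auto simp: algebra_simps)
  have "\<exists>t>v. t < v + h \<and> \<phi>u (s, v+h) - \<phi>u (s, v) = (v + h - v) * \<phi>uv (s, t)"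
    using h s by (intro MVT2[where f = "\<lambda>t. \<phi>u (s, t)"]) (auto intro: duv)
  then obtain t where "t \<in> {v<..<v+h}" "\<phi>u (s, v+h) - \<phi>u (s, v) = h * \<phi>uv (s, t)"
    by auto
  with s \<Delta> show thesis by (intro that[of s t]) auto
qed

lemma continuous_eq_if_equal_nearby:
  fixes g1 g2 :: "'a::metric_space \<Rightarrow> real"
  assumes c1: "isCont g1 x" and c2: "isCont g2 x"
    and near: "\<And>e. e > 0 \<Longrightarrow> \<exists>p q. dist p x < e \<and> dist q x < e \<and> g1 p = g2 q"
  shows "g1 x = g2 x"
proof (rule ccontr)
  assume ne: "g1 x \<noteq> g2 x"
  define \<epsilon> where "\<epsilon> = \<bar>g1 x - g2 x\<bar> / 2"
  have \<epsilon>: "\<epsilon> > 0" using ne by (simp add: \<epsilon>_def)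
  obtain d1 where d1: "d1 > 0" "\<And>y. dist y x < d1 \<Longrightarrow> dist (g1 y) (g1 x) < \<epsilon>"
    using c1[unfolded continuous_at_eps_delta] \<epsilon> by blast
  obtain d2 where d2: "d2 > 0" "\<And>y. dist y x < d2 \<Longrightarrow> dist (g2 y) (g2 x) < \<epsilon>"
    using c2[unfolded continuous_at_eps_delta] \<epsilon> by blast
  obtain p q where p: "dist p x < min d1 d2" and q: "dist q x < min d1 d2" and pq: "g1 p = g2 q"
    using near[of "min d1 d2"] d1 d2 by auto
  have "dist (g1 p) (g1 x) < \<epsilon>" using d1(2) p by simp
  moreover have "dist (g2 q) (g2 x) < \<epsilon>" using d2(2) q by simp
  ultimately show False using pq unfolding \<epsilon>_def dist_real_def by (simp add: abs_less_iff abs_if split: if_split_asm)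
qed

lemma dist_in_square:
  assumes "s \<in> {u..u+h}" "t \<in> {v..v+h}"
  shows "dist (s, t) (u, v) \<le> 2 * h"
proof -
  have "dist (s, t) (u, v) \<le> \<bar>dist s u\<bar> + \<bar>dist t v\<bar>"
    unfolding dist_Pair_Pair by (rule sqrt_sum_squares_le_sum_abs)
  also have "\<dots> \<le> 2 * h" using assms by (simp add: dist_real_def)
  finally show ?thesis .
qed

text \<open>Paired with a fixed vector w, both mixed partial derivatives equal the mixed second
  difference over a small square divided by h^2, at suitable points of that square (the mean
  value theorem applied to f and to f with swapped arguments).\<close>

lemma mixed_partials_meet_near:
  fixes f :: "real \<times> real \<Rightarrow> 'a::real_inner"
  assumes S: "open S" and sm: "smooth_on S f" and p: "(u, v) \<in> S" and e: "e > 0"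
  shows "\<exists>q1 q2. dist q1 (u, v) < e \<and> dist q2 (u, v) < e \<and> pv (pu f) q1 \<bullet> w = pu (pv f) q2 \<bullet> w"
proof -
  obtain r where r: "r > 0" "ball (u, v) r \<subseteq> S" using S p open_contains_ball by blast
  define h where "h = min r e / 4"
  have h: "h > 0" using r e by (simp add: h_def)
  have close: "dist (s, t) (u, v) < min r e" if "s \<in> {u..u+h}" "t \<in> {v..v+h}" for s t
    using dist_in_square[OF that] h unfolding h_def by auto
  have inS: "(s, t) \<in> S" if "s \<in> {u..u+h}" "t \<in> {v..v+h}" for s t
    using close[OF that] r by (auto simp: dist_commute)
  have du: "((\<lambda>s. F (s, t) \<bullet> w) has_real_derivative pu F (s, t) \<bullet> w) (at s)"
    if "smooth_on S F" "s \<in> {u..u+h}" "t \<in> {v..v+h}" for F :: "real \<times> real \<Rightarrow> 'a" and s t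
    using has_real_derivative_inner_const[OF smooth_on_has_pu[OF that(1) inS[OF that(2,3)]]] by simp
  have dv: "((\<lambda>t. F (s, t) \<bullet> w) has_real_derivative pv F (s, t) \<bullet> w) (at t)"
    if "smooth_on S F" "s \<in> {u..u+h}" "t \<in> {v..v+h}" for F :: "real \<times> real \<Rightarrow> 'a" and s t
    using has_real_derivative_inner_const[OF smooth_on_has_pv[OF that(1) inS[OF that(2,3)]]] by simp
  obtain s1 t1 where st1: "s1 \<in> {u<..<u+h}" "t1 \<in> {v<..<v+h}"
    and \<Delta>1: "f (u+h, v+h) \<bullet> w - f (u+h, v) \<bullet> w - f (u, v+h) \<bullet> w + f (u, v) \<bullet> w
              = h * h * (pv (pu f) (s1, t1) \<bullet> w)"
    by (rule mixed_difference_mean_value[OF h, where \<phi> = "\<lambda>q. f q \<bullet> w"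
          and \<phi>u = "\<lambda>q. pu f q \<bullet> w" and \<phi>uv = "\<lambda>q. pv (pu f) q \<bullet> w"])
       (use du[OF sm] dv[OF smooth_on_pu[OF sm]] in auto)
  obtain t2 s2 where st2: "t2 \<in> {v<..<v+h}" "s2 \<in> {u<..<u+h}"
    and \<Delta>2: "f (u+h, v+h) \<bullet> w - f (u, v+h) \<bullet> w - f (u+h, v) \<bullet> w + f (u, v) \<bullet> w
              = h * h * (pu (pv f) (s2, t2) \<bullet> w)"
    by (rule mixed_difference_mean_value[OF h, where \<phi> = "\<lambda>(t, s). f (s, t) \<bullet> w"
          and \<phi>u = "\<lambda>(t, s). pv f (s, t) \<bullet> w" and \<phi>uv = "\<lambda>(t, s). pu (pv f) (s, t) \<bullet> w"
          and u = v and v = u])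
       (use dv[OF sm] du[OF smooth_on_pv[OF sm]] in auto)
  from \<Delta>1 \<Delta>2 have "h * h * (pv (pu f) (s1, t1) \<bullet> w) = h * h * (pu (pv f) (s2, t2) \<bullet> w)"
    by linarith
  with h have "pv (pu f) (s1, t1) \<bullet> w = pu (pv f) (s2, t2) \<bullet> w" by simp
  moreover have "dist (s1, t1) (u, v) < e" "dist (s2, t2) (u, v) < e"
    using close st1 st2 by fastforce+
  ultimately show ?thesis by blast
qed

text \<open>Both mixed
  partials paired with their difference w are continuous and meet arbitrarily close to p, so
  they agree at p, which forces w = 0.\<close>

lemma mixed_partials_commute:
  fixes f :: "real \<times> real \<Rightarrow> 'a::real_inner"
  assumes S: "open S" and sm: "smooth_on S f" and p: "p \<in> S"
  shows "pv (pu f) p = pu (pv f) p"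
proof -
  obtain u v where uv: "p = (u, v)" by fastforce
  define w where "w = pv (pu f) p - pu (pv f) p"
  have "isCont (\<lambda>q. pv (pu f) q \<bullet> w) p" "isCont (\<lambda>q. pu (pv f) q \<bullet> w) p"
    using S p smooth_on_continuous[OF smooth_on_pv[OF smooth_on_pu[OF sm]]]
      smooth_on_continuous[OF smooth_on_pu[OF smooth_on_pv[OF sm]]]
    by (auto intro!: continuous_intros simp: continuous_on_eq_continuous_at)
  then have "pv (pu f) p \<bullet> w = pu (pv f) p \<bullet> w"
    by (rule continuous_eq_if_equal_nearby)
       (use mixed_partials_meet_near[OF S sm p[unfolded uv]] uv in auto)
  then have "w \<bullet> w = 0" unfolding w_def by (simp add: inner_diff_left)
  then show ?thesis unfolding w_def by simp
qed

lemma has_vector_derivative_normalize: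
  fixes W :: "real \<Rightarrow> 'a::real_inner"
  assumes W: "(W has_vector_derivative W') (at t)" and pos: "W t \<bullet> W t > 0"
  shows "\<exists>c. ((\<lambda>s. (1 / sqrt (W s \<bullet> W s)) *\<^sub>R W s) has_vector_derivative
               (c *\<^sub>R W t + (1 / sqrt (W t \<bullet> W t)) *\<^sub>R W')) (at t)"
proof -
  have "((\<lambda>s. sqrt (W s \<bullet> W s)) has_real_derivative
          (inverse (sqrt (W t \<bullet> W t)) / 2 * (W' \<bullet> W t + W t \<bullet> W'))) (at t)"
    by (rule DERIV_chain2[OF DERIV_real_sqrt[OF pos] has_real_derivative_inner[OF W W]])
  from DERIV_inverse_fun[OF this] pos
  obtain c where "((\<lambda>s. 1 / sqrt (W s \<bullet> W s)) has_real_derivative c) (at t)"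
    unfolding divide_inverse by auto
  from has_vector_derivative_scaleR[OF this W] show ?thesis by (auto simp: add.commute)
qed

lemma pu_normalize:
  fixes W :: "real \<times> real \<Rightarrow> 'a::real_inner"
  assumes "smooth_on U W" "(u, v) \<in> U" "W (u, v) \<bullet> W (u, v) > 0"
  shows "\<exists>c. pu (\<lambda>q. (1 / sqrt (W q \<bullet> W q)) *\<^sub>R W q) (u, v)
               = c *\<^sub>R W (u, v) + (1 / sqrt (W (u, v) \<bullet> W (u, v))) *\<^sub>R pu W (u, v)"
  using has_vector_derivative_normalize[OF smooth_on_has_pu[OF assms(1,2)]] assms(3)
  by (auto simp: pu_def[of "\<lambda>q. (1 / sqrt (W q \<bullet> W q)) *\<^sub>R W q"] dest: vector_derivative_at)

lemma pv_normalize: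
  fixes W :: "real \<times> real \<Rightarrow> 'a::real_inner"
  assumes "smooth_on U W" "(u, v) \<in> U" "W (u, v) \<bullet> W (u, v) > 0"
  shows "\<exists>c. pv (\<lambda>q. (1 / sqrt (W q \<bullet> W q)) *\<^sub>R W q) (u, v)
               = c *\<^sub>R W (u, v) + (1 / sqrt (W (u, v) \<bullet> W (u, v))) *\<^sub>R pv W (u, v)"
  using has_vector_derivative_normalize[OF smooth_on_has_pv[OF assms(1,2)]] assms(3)
  by (auto simp: pv_def[of "\<lambda>q. (1 / sqrt (W q \<bullet> W q)) *\<^sub>R W q"] dest: vector_derivative_at)

subsection \<open>Surfaces with a geometric frame in orthogonal parameters\<close>

lemma pos_orthonormal_inner:
  assumes "pos_orthonormal a b c d"
  shows "a \<bullet> a = 1" "b \<bullet> b = 1" "c \<bullet> c = 1" "d \<bullet> d = 1"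
    "a \<bullet> b = 0" "a \<bullet> c = 0" "a \<bullet> d = 0" "b \<bullet> c = 0" "b \<bullet> d = 0" "c \<bullet> d = 0"
    "b \<bullet> a = 0" "c \<bullet> a = 0" "d \<bullet> a = 0" "c \<bullet> b = 0" "d \<bullet> b = 0" "d \<bullet> c = 0"
  using assms unfolding pos_orthonormal_def by (auto simp: inner_commute)

locale orthogonal_geometric_frame =
  fixes U :: "(real \<times> real) set"
    and z n1 n2 :: "real \<times> real \<Rightarrow> real^4"
    and \<nu> \<mu> \<gamma>1 \<gamma>2 \<beta>1 \<beta>2 :: "real \<times> real \<Rightarrow> real"
  assumes regular: "regular_surface U z"
    and orthogonal: "\<forall>p\<in>U. FF z p = 0"
    and frame: "geometric_frame U z n1 n2 \<nu> \<mu> \<gamma>1 \<gamma>2 \<beta>1 \<beta>2"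
begin

lemma open_U: "open U"
  and smooth_z: "smooth_on U z"
  using regular unfolding regular_surface_def by auto

lemma smooth_n1: "smooth_on U n1" and smooth_n2: "smooth_on U n2"
  and smooth_mu: "smooth_on U \<mu>" and smooth_nu: "smooth_on U \<nu>"
  using frame unfolding geometric_frame_def by auto

lemma E_pos: "p \<in> U \<Longrightarrow> EE z p > 0" and G_pos: "p \<in> U \<Longrightarrow> GG z p > 0"
proof -
  assume p: "p \<in> U"
  have "EE z p * GG z p > 0"
    using regular orthogonal p unfolding regular_surface_def by auto
  moreover have "EE z p \<ge> 0" "GG z p \<ge> 0" by (auto simp: EE_def GG_def)
  ultimately show "EE z p > 0" "GG z p > 0" by (auto simp: zero_less_mult_iff)
qed

lemma frame_at:
  assumes "p \<in> U"
  shows "pos_orthonormal (xu z p) (yv z p) (n1 p) (n2 p)"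
    and "Dx z (xu z) p = \<gamma>1 p *\<^sub>R yv z p + \<nu> p *\<^sub>R n1 p"
    and "Dy z (xu z) p = - \<gamma>2 p *\<^sub>R yv z p + \<mu> p *\<^sub>R n2 p"
    and "Dy z (yv z) p = \<gamma>2 p *\<^sub>R xu z p - \<nu> p *\<^sub>R n1 p"
    and "Dx z n1 p = - \<nu> p *\<^sub>R xu z p + \<beta>1 p *\<^sub>R n2 p"
    and "Dy z n1 p = \<nu> p *\<^sub>R yv z p + \<beta>2 p *\<^sub>R n2 p"
    and "Dx z n2 p = - \<mu> p *\<^sub>R yv z p - \<beta>1 p *\<^sub>R n1 p"
    and "Dy z n2 p = - \<mu> p *\<^sub>R xu z p - \<beta>2 p *\<^sub>R n1 p"
  using frame assms unfolding geometric_frame_def Let_def by blast+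

lemmas frame_inner = pos_orthonormal_inner[OF frame_at(1)]

lemma pu_eq_Dx: "p \<in> U \<Longrightarrow> pu X p = sqrt (EE z p) *\<^sub>R Dx z X p"
  using E_pos[of p] by (simp add: Dx_def)

lemma pv_eq_Dy: "p \<in> U \<Longrightarrow> pv X p = sqrt (GG z p) *\<^sub>R Dy z X p"
  using G_pos[of p] by (simp add: Dy_def)

lemma zu_eq: "p \<in> U \<Longrightarrow> pu z p = sqrt (EE z p) *\<^sub>R xu z p"
  using E_pos[of p] by (simp add: xu_def)

lemma zv_eq: "p \<in> U \<Longrightarrow> pv z p = sqrt (GG z p) *\<^sub>R yv z p"
  using G_pos[of p] by (simp add: yv_def)

lemma mixed_z: "p \<in> U \<Longrightarrow> pv (pu z) p = pu (pv z) p"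
  by (rule mixed_partials_commute[OF open_U smooth_z])

lemma zuu_frame:
  assumes p: "p \<in> U"
  obtains c where "pu (pu z) p = c *\<^sub>R xu z p + EE z p *\<^sub>R (\<gamma>1 p *\<^sub>R yv z p + \<nu> p *\<^sub>R n1 p)"
proof -
  obtain u v where uv: "p = (u, v)" by fastforce
  have xu: "xu z = (\<lambda>q. (1 / sqrt (pu z q \<bullet> pu z q)) *\<^sub>R pu z q)"
    by (simp add: xu_def EE_def fun_eq_iff)
  obtain c where c: "pu (xu z) p = c *\<^sub>R pu z p + (1 / sqrt (EE z p)) *\<^sub>R pu (pu z) p"
    using pu_normalize[OF smooth_on_pu[OF smooth_z], of u v] p E_pos[OF p] unfolding xu EE_def uv
    by auto
  have "pu (pu z) p = sqrt (EE z p) *\<^sub>R (pu (xu z) p - c *\<^sub>R pu z p)"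
    using c E_pos[OF p] by simp
  also have "\<dots> = (- c * EE z p) *\<^sub>R xu z p + EE z p *\<^sub>R (\<gamma>1 p *\<^sub>R yv z p + \<nu> p *\<^sub>R n1 p)"
    using E_pos[OF p] unfolding pu_eq_Dx[OF p, of "xu z"] frame_at(2)[OF p] zu_eq[OF p]
    by (simp add: algebra_simps)
  finally show thesis by (rule that)
qed

lemma zuv_frame:
  assumes p: "p \<in> U"
  obtains c where "pv (pu z) p = c *\<^sub>R xu z p
    + (sqrt (EE z p) * sqrt (GG z p)) *\<^sub>R (- \<gamma>2 p *\<^sub>R yv z p + \<mu> p *\<^sub>R n2 p)"
proof -
  obtain u v where uv: "p = (u, v)" by fastforce
  have xu: "xu z = (\<lambda>q. (1 / sqrt (pu z q \<bullet> pu z q)) *\<^sub>R pu z q)"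
    by (simp add: xu_def EE_def fun_eq_iff)
  obtain c where c: "pv (xu z) p = c *\<^sub>R pu z p + (1 / sqrt (EE z p)) *\<^sub>R pv (pu z) p"
    using pv_normalize[OF smooth_on_pu[OF smooth_z], of u v] p E_pos[OF p] unfolding xu EE_def uv
    by auto
  have "pv (pu z) p = sqrt (EE z p) *\<^sub>R (pv (xu z) p - c *\<^sub>R pu z p)"
    using c E_pos[OF p] by simp
  also have "\<dots> = (- c * EE z p) *\<^sub>R xu z p
      + (sqrt (EE z p) * sqrt (GG z p)) *\<^sub>R (- \<gamma>2 p *\<^sub>R yv z p + \<mu> p *\<^sub>R n2 p)"
    using E_pos[OF p] unfolding pv_eq_Dy[OF p, of "xu z"] frame_at(3)[OF p] zu_eq[OF p]
    by (simp add: algebra_simps)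
  finally show thesis by (rule that)
qed

lemma zvv_frame:
  assumes p: "p \<in> U"
  obtains c where "pv (pv z) p = c *\<^sub>R yv z p + GG z p *\<^sub>R (\<gamma>2 p *\<^sub>R xu z p - \<nu> p *\<^sub>R n1 p)"
proof -
  obtain u v where uv: "p = (u, v)" by fastforce
  have yv: "yv z = (\<lambda>q. (1 / sqrt (pv z q \<bullet> pv z q)) *\<^sub>R pv z q)"
    by (simp add: yv_def GG_def fun_eq_iff)
  obtain c where c: "pv (yv z) p = c *\<^sub>R pv z p + (1 / sqrt (GG z p)) *\<^sub>R pv (pv z) p"
    using pv_normalize[OF smooth_on_pv[OF smooth_z], of u v] p G_pos[OF p] unfolding yv GG_def uv
    by auto
  have "pv (pv z) p = sqrt (GG z p) *\<^sub>R (pv (yv z) p - c *\<^sub>R pv z p)"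
    using c G_pos[OF p] by simp
  also have "\<dots> = (- c * GG z p) *\<^sub>R yv z p + GG z p *\<^sub>R (\<gamma>2 p *\<^sub>R xu z p - \<nu> p *\<^sub>R n1 p)"
    using G_pos[OF p] unfolding pv_eq_Dy[OF p, of "yv z"] frame_at(4)[OF p] zv_eq[OF p]
    by (simp add: algebra_simps)
  finally show thesis by (rule that)
qed

lemma second_fundamental_form:
  assumes p: "p \<in> U"
  shows "pu (pu z) p \<bullet> n1 p = EE z p * \<nu> p" "pu (pu z) p \<bullet> n2 p = 0"
    and "pv (pu z) p \<bullet> n1 p = 0" "pv (pu z) p \<bullet> n2 p = sqrt (EE z p) * sqrt (GG z p) * \<mu> p"
    and "pv (pv z) p \<bullet> n1 p = - (GG z p * \<nu> p)" "pv (pv z) p \<bullet> n2 p = 0"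
proof -
  note o = frame_inner[OF p]
  obtain c1 where "pu (pu z) p = c1 *\<^sub>R xu z p + EE z p *\<^sub>R (\<gamma>1 p *\<^sub>R yv z p + \<nu> p *\<^sub>R n1 p)"
    using zuu_frame[OF p] .
  then show "pu (pu z) p \<bullet> n1 p = EE z p * \<nu> p" "pu (pu z) p \<bullet> n2 p = 0"
    using o by (simp_all add: inner_add_left)
  obtain c2 where "pv (pu z) p = c2 *\<^sub>R xu z p
      + (sqrt (EE z p) * sqrt (GG z p)) *\<^sub>R (- \<gamma>2 p *\<^sub>R yv z p + \<mu> p *\<^sub>R n2 p)"
    using zuv_frame[OF p] .
  then show "pv (pu z) p \<bullet> n1 p = 0" "pv (pu z) p \<bullet> n2 p = sqrt (EE z p) * sqrt (GG z p) * \<mu> p"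
    using o by (simp_all add: inner_add_left inner_diff_left)
  obtain c3 where "pv (pv z) p = c3 *\<^sub>R yv z p + GG z p *\<^sub>R (\<gamma>2 p *\<^sub>R xu z p - \<nu> p *\<^sub>R n1 p)"
    using zvv_frame[OF p] .
  then show "pv (pv z) p \<bullet> n1 p = - (GG z p * \<nu> p)" "pv (pv z) p \<bullet> n2 p = 0"
    using o by (simp_all add: inner_add_left inner_diff_left)
qed

lemma has_pu_EE:
  assumes "(u, v) \<in> U"
  shows "((\<lambda>t. EE z (t, v)) has_real_derivative 2 * (pu (pu z) (u, v) \<bullet> pu z (u, v))) (at u)"
  using has_real_pu_inner[OF smooth_on_pu[OF smooth_z] smooth_on_pu[OF smooth_z] assms]
  by (simp add: EE_def inner_commute)

lemma has_pu_GG: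
  assumes "(u, v) \<in> U"
  shows "((\<lambda>t. GG z (t, v)) has_real_derivative 2 * (pv (pu z) (u, v) \<bullet> pv z (u, v))) (at u)"
  using has_real_pu_inner[OF smooth_on_pv[OF smooth_z] smooth_on_pv[OF smooth_z] assms]
  by (simp add: GG_def inner_commute mixed_z[OF assms])

lemma pv_FF_zero:
  assumes "p \<in> U"
  shows "pv (pu z) p \<bullet> pv z p + pu z p \<bullet> pv (pv z) p = 0"
proof -
  obtain u v where uv: "p = (u, v)" by fastforce
  have "pv (FF z) p = pv (\<lambda>q. 0) p"
    using orthogonal by (intro pv_cong_open[OF open_U assms]) simp
  then show ?thesis
    using pv_inner[OF smooth_on_pu[OF smooth_z] smooth_on_pv[OF smooth_z], of u v] assms
    unfolding FF_def uv by (simp add: pv_const_zero)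
qed

lemma tangent_parts:
  assumes p: "(u, v) \<in> U"
  defines "p \<equiv> (u, v)"
  shows "pu (EE z) p = 2 * sqrt (EE z p) * (pu (pu z) p \<bullet> xu z p)"
    and "pu (GG z) p = 2 * sqrt (GG z p) * (pv (pu z) p \<bullet> yv z p)"
    and "sqrt (EE z p) * (pv (pv z) p \<bullet> xu z p) = - sqrt (GG z p) * (pv (pu z) p \<bullet> yv z p)"
proof -
  show "pu (EE z) p = 2 * sqrt (EE z p) * (pu (pu z) p \<bullet> xu z p)"
    using pu_eqI[OF has_pu_EE[OF p]] zu_eq p unfolding p_def by simp
  show "pu (GG z) p = 2 * sqrt (GG z p) * (pv (pu z) p \<bullet> yv z p)"
    using pu_eqI[OF has_pu_GG[OF p]] zv_eq p unfolding p_def by simp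
  have "pv (pu z) p \<bullet> pv z p = - (pu z p \<bullet> pv (pv z) p)"
    using pv_FF_zero p unfolding p_def by (simp add: eq_neg_iff_add_eq_0)
  then show "sqrt (EE z p) * (pv (pv z) p \<bullet> xu z p) = - sqrt (GG z p) * (pv (pu z) p \<bullet> yv z p)"
    using zu_eq zv_eq p unfolding p_def by (simp add: inner_commute)
qed

text \<open>Normal parts of the third derivatives z_uuv and z_uvv, from differentiating
  z_uu . n2 = 0 and z_uv . n1 = 0 with respect to v and exchanging the order of
  differentiation.\<close>

lemma third_derivative_n2:
  assumes uv: "(u, v) \<in> U"
  defines "p \<equiv> (u, v)"
  shows "pu (pv (pu z)) p \<bullet> n2 p = - (pu (pu z) p \<bullet> pv n2 p)"
proof -
  have p: "p \<in> U" using uv by (simp add: p_def)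
  have "pv (\<lambda>q. pu (pu z) q \<bullet> n2 q) p = pv (\<lambda>q. 0) p"
    using second_fundamental_form(2) by (intro pv_cong_open[OF open_U p]) simp
  then have "pv (pu (pu z)) p \<bullet> n2 p + pu (pu z) p \<bullet> pv n2 p = 0"
    using pv_inner[OF smooth_on_pu[OF smooth_on_pu[OF smooth_z]] smooth_n2 uv]
    by (simp add: pv_const_zero p_def)
  moreover have "pu (pv (pu z)) p = pv (pu (pu z)) p"
    using mixed_partials_commute[OF open_U smooth_on_pu[OF smooth_z] p] by simp
  ultimately show ?thesis by (simp add: eq_neg_iff_add_eq_0)
qed

lemma third_derivative_n1:
  assumes uv: "(u, v) \<in> U"
  defines "p \<equiv> (u, v)"
  shows "pu (pv (pv z)) p \<bullet> n1 p = - (pv (pu z) p \<bullet> pv n1 p)"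
proof -
  have p: "p \<in> U" using uv by (simp add: p_def)
  have "pv (\<lambda>q. pu (pv z) q \<bullet> n1 q) p = pv (\<lambda>q. 0) p"
    using second_fundamental_form(3) mixed_z by (intro pv_cong_open[OF open_U p]) simp
  then have "pv (pu (pv z)) p \<bullet> n1 p + pu (pv z) p \<bullet> pv n1 p = 0"
    using pv_inner[OF smooth_on_pu[OF smooth_on_pv[OF smooth_z]] smooth_n1 uv]
    by (simp add: pv_const_zero p_def)
  moreover have "pv (pu (pv z)) p = pu (pv (pv z)) p"
    using mixed_partials_commute[OF open_U smooth_on_pv[OF smooth_z] p] by simp
  ultimately show ?thesis using mixed_z[OF p] by (simp add: eq_neg_iff_add_eq_0)
qed

text \<open>Codazzi-type formula for the u-derivative of mu, obtained by differentiating
  z_uv . n2 = sqrt E sqrt G mu with respect to u.\<close>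

lemma mu_u:
  assumes uv: "(u, v) \<in> U"
  defines "p \<equiv> (u, v)"
  shows "pu \<mu> p = sqrt (EE z p) * \<beta>2 p * \<nu> p - \<mu> p * pu (GG z) p / GG z p"
proof -
  have p: "p \<in> U" using uv by (simp add: p_def)
  define e g A B where "e = sqrt (EE z p)" and "g = sqrt (GG z p)"
    and "A = pu (pu z) p \<bullet> xu z p" and "B = pv (pu z) p \<bullet> yv z p"
  have e: "e > 0" "e * e = EE z p" and g: "g > 0" "g * g = GG z p"
    using E_pos[OF p] G_pos[OF p] by (auto simp: e_def g_def)
  note sff = second_fundamental_form[OF p] and tan = tangent_parts[OF uv, folded p_def]
  have "pu (\<lambda>q. pv (pu z) q \<bullet> n2 q) p = pu (pv (pu z)) p \<bullet> n2 p + pv (pu z) p \<bullet> pu n2 p"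
    using pu_inner[OF smooth_on_pv[OF smooth_on_pu[OF smooth_z]] smooth_n2 uv] by (simp add: p_def)
  also have "\<dots> = g * (\<mu> p * A + \<beta>2 p * (e * e * \<nu> p)) - e * (\<mu> p * B)"
    unfolding third_derivative_n2[OF uv, folded p_def] pv_eq_Dy[OF p, of n2] pu_eq_Dx[OF p, of n2]
      frame_at(7,8)[OF p] e(2)
    using sff by (simp add: inner_diff_right e_def g_def A_def B_def algebra_simps)
  finally have lhs: "pu (\<lambda>q. pv (pu z) q \<bullet> n2 q) p
      = g * (\<mu> p * A + \<beta>2 p * (e * e * \<nu> p)) - e * (\<mu> p * B)" .
  have "((\<lambda>t. sqrt (EE z (t, v)) * sqrt (GG z (t, v)) * \<mu> (t, v)) has_real_derivative
      (A * g + e * B) * \<mu> p + e * g * pu \<mu> p) (at u)"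
    using E_pos[OF p] G_pos[OF p] pu_eqI[OF has_pu_EE[OF uv]] pu_eqI[OF has_pu_GG[OF uv]] tan(1,2)
    by (auto intro!: derivative_eq_intros has_pu_EE[OF uv] has_pu_GG[OF uv]
        smooth_on_has_real_pu[OF smooth_mu uv] simp: p_def e_def g_def A_def B_def field_simps)
  then have rhs: "pu (\<lambda>q. sqrt (EE z q) * sqrt (GG z q) * \<mu> q) p
      = (A * g + e * B) * \<mu> p + e * g * pu \<mu> p"
    unfolding p_def by (rule pu_eqI[where f = "\<lambda>q. sqrt (EE z q) * sqrt (GG z q) * \<mu> q"])
  have "pu (\<lambda>q. pv (pu z) q \<bullet> n2 q) p = pu (\<lambda>q. sqrt (EE z q) * sqrt (GG z q) * \<mu> q) p"
    using second_fundamental_form(4) by (intro pu_cong_open[OF open_U p]) simp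
  then have "e * (g * pu \<mu> p + 2 * \<mu> p * B) = e * (e * g * \<beta>2 p * \<nu> p)"
    unfolding lhs rhs by (simp add: algebra_simps)
  then have "g * pu \<mu> p + 2 * \<mu> p * B = e * g * \<beta>2 p * \<nu> p"
    using e(1) by simp
  then show ?thesis
    unfolding tan(2) e_def[symmetric] g_def[symmetric] B_def[symmetric] g(2)[symmetric]
    using e(1) g(1) by (simp add: field_simps)
qed

text \<open>Codazzi-type formula for the u-derivative of nu, obtained by differentiating
  z_vv . n1 = - G nu with respect to u.\<close>

lemma nu_u:
  assumes uv: "(u, v) \<in> U"
  defines "p \<equiv> (u, v)"
  shows "pu \<nu> p = sqrt (EE z p) * \<beta>2 p * \<mu> p - \<nu> p * pu (GG z) p / GG z p"
proof -
  have p: "p \<in> U" using uv by (simp add: p_def)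
  define e g B C where "e = sqrt (EE z p)" and "g = sqrt (GG z p)"
    and "B = pv (pu z) p \<bullet> yv z p" and "C = pv (pv z) p \<bullet> xu z p"
  have e: "e > 0" "e * e = EE z p" and g: "g > 0" "g * g = GG z p"
    using E_pos[OF p] G_pos[OF p] by (auto simp: e_def g_def)
  note sff = second_fundamental_form[OF p] and tan = tangent_parts[OF uv, folded p_def]
  have "pu (\<lambda>q. pv (pv z) q \<bullet> n1 q) p = pu (pv (pv z)) p \<bullet> n1 p + pv (pv z) p \<bullet> pu n1 p"
    using pu_inner[OF smooth_on_pv[OF smooth_on_pv[OF smooth_z]] smooth_n1 uv] by (simp add: p_def)
  also have "\<dots> = - (g * (\<nu> p * B + \<beta>2 p * (e * g * \<mu> p))) - \<nu> p * (e * C)"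
    unfolding third_derivative_n1[OF uv, folded p_def] pv_eq_Dy[OF p, of n1] pu_eq_Dx[OF p, of n1]
      frame_at(5,6)[OF p]
    using sff by (simp add: inner_add_right e_def g_def B_def C_def algebra_simps)
  also have "\<dots> = - (\<beta>2 p * e * g * g * \<mu> p)"
    using tan(3) unfolding e_def[symmetric] g_def[symmetric] B_def[symmetric] C_def[symmetric]
    by (simp add: algebra_simps)
  finally have lhs: "pu (\<lambda>q. pv (pv z) q \<bullet> n1 q) p = - (\<beta>2 p * e * g * g * \<mu> p)" .
  have "((\<lambda>t. - (GG z (t, v) * \<nu> (t, v))) has_real_derivative
      - (2 * g * B * \<nu> p + g * g * pu \<nu> p)) (at u)"
    using pu_eqI[OF has_pu_GG[OF uv]] tan(2) g(2)
    by (auto intro!: derivative_eq_intros has_pu_GG[OF uv] smooth_on_has_real_pu[OF smooth_nu uv]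
        simp: p_def g_def B_def)
  then have rhs: "pu (\<lambda>q. - (GG z q * \<nu> q)) p = - (2 * g * B * \<nu> p + g * g * pu \<nu> p)"
    unfolding p_def by (rule pu_eqI[where f = "\<lambda>q. - (GG z q * \<nu> q)"])
  have "pu (\<lambda>q. pv (pv z) q \<bullet> n1 q) p = pu (\<lambda>q. - (GG z q * \<nu> q)) p"
    using second_fundamental_form(5) by (intro pu_cong_open[OF open_U p]) simp
  then have "g * (g * pu \<nu> p + 2 * B * \<nu> p) = g * (e * g * \<beta>2 p * \<mu> p)"
    unfolding lhs rhs by (simp add: algebra_simps)
  then have "g * pu \<nu> p + 2 * B * \<nu> p = e * g * \<beta>2 p * \<mu> p"
    using g(1) by simp
  then show ?thesis
    unfolding tan(2) e_def[symmetric] g_def[symmetric] B_def[symmetric] g(2)[symmetric]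
    using e(1) g(1) by (simp add: field_simps)
qed

lemma u_derivative_vanishes:
  assumes uv: "(u, v) \<in> U"
  shows "((\<lambda>t. (GG z (t, v))\<^sup>2 * ((\<mu> (t, v))\<^sup>2 - (\<nu> (t, v))\<^sup>2)) has_real_derivative 0) (at u)"
proof -
  let ?G = "GG z (u, v)" and ?Gu = "pu (GG z) (u, v)"
  have dG: "((\<lambda>t. GG z (t, v)) has_real_derivative ?Gu) (at u)"
    using has_pu_GG[OF uv] pu_eqI[OF has_pu_GG[OF uv]] by simp
  have "((\<lambda>t. (GG z (t, v))\<^sup>2 * ((\<mu> (t, v))\<^sup>2 - (\<nu> (t, v))\<^sup>2)) has_real_derivative
      2 * ?G * ?Gu * ((\<mu> (u, v))\<^sup>2 - (\<nu> (u, v))\<^sup>2)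
      + ?G\<^sup>2 * (2 * \<mu> (u, v) * pu \<mu> (u, v) - 2 * \<nu> (u, v) * pu \<nu> (u, v))) (at u)"
    by (auto intro!: derivative_eq_intros dG smooth_on_has_real_pu[OF smooth_mu uv]
        smooth_on_has_real_pu[OF smooth_nu uv] simp: algebra_simps)
  moreover have "2 * ?G * ?Gu * ((\<mu> (u, v))\<^sup>2 - (\<nu> (u, v))\<^sup>2)
      + ?G\<^sup>2 * (2 * \<mu> (u, v) * pu \<mu> (u, v) - 2 * \<nu> (u, v) * pu \<nu> (u, v)) = 0"
    unfolding mu_u[OF uv] nu_u[OF uv] using G_pos[OF uv]
    by (simp add: field_simps power2_eq_square)
  ultimately show ?thesis by simp
qed

lemma u_line_invariant:
  assumes S: "convex S" and line: "\<And>t. t \<in> S \<Longrightarrow> (t, v) \<in> U" and u12: "u1 \<in> S" "u2 \<in> S"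
  shows "GG z (u1, v) * sqrt \<bar>(\<mu> (u1, v))\<^sup>2 - (\<nu> (u1, v))\<^sup>2\<bar>
       = GG z (u2, v) * sqrt \<bar>(\<mu> (u2, v))\<^sup>2 - (\<nu> (u2, v))\<^sup>2\<bar>"
proof -
  define h where "h t = (GG z (t, v))\<^sup>2 * ((\<mu> (t, v))\<^sup>2 - (\<nu> (t, v))\<^sup>2)" for t
  have "\<exists>c. \<forall>t\<in>S. h t = c"
  proof (rule has_field_derivative_zero_constant[OF S])
    show "(h has_field_derivative 0) (at t within S)" if "t \<in> S" for t
      using u_derivative_vanishes[OF line[OF that]] unfolding h_def
      by (rule has_field_derivative_at_within)
  qed
  then have "h u1 = h u2" using u12 by auto
  moreover have "GG z (t, v) * sqrt \<bar>(\<mu> (t, v))\<^sup>2 - (\<nu> (t, v))\<^sup>2\<bar> = sqrt \<bar>h t\<bar>" if "t \<in> S" for t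
    using G_pos[OF line[OF that]]
    by (simp add: h_def abs_mult real_sqrt_mult real_sqrt_abs)
  ultimately show ?thesis using u12 by simp
qed

end

theorem lemma7p1:
  fixes z n1 n2 :: "real \<times> real \<Rightarrow> real^4"
    and \<nu> \<mu> \<gamma>1 \<gamma>2 \<beta>1 \<beta>2 :: "real \<times> real \<Rightarrow> real"
    and a b c d :: real
  defines "U \<equiv> {a<..<b} \<times> {c<..<d}"
  assumes reg: "regular_surface U z"
    and semi: "\<forall>p\<in>U. FF z p = 0"
    and frame: "geometric_frame U z n1 n2 \<nu> \<mu> \<gamma>1 \<gamma>2 \<beta>1 \<beta>2"
    and minimal: "minimal_surface U z"
    and gentype: "\<forall>p\<in>U. (gauss_curv z p)^2 - (normal_curv z n1 n2 p)^2 > 0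
                        \<and> normal_curv z n1 n2 p \<noteq> 0"
    and g1: "\<forall>p\<in>U. \<gamma>1 p = 0"
  shows "\<forall>u1 u2 v. (u1, v) \<in> U \<longrightarrow> (u2, v) \<in> U \<longrightarrow>
           GG z (u1, v) * sqrt \<bar>(\<mu> (u1, v))^2 - (\<nu> (u1, v))^2\<bar> =
           GG z (u2, v) * sqrt \<bar>(\<mu> (u2, v))^2 - (\<nu> (u2, v))^2\<bar>"
proof (intro allI impI)
  interpret orthogonal_geometric_frame U z n1 n2 \<nu> \<mu> \<gamma>1 \<gamma>2 \<beta>1 \<beta>2
    using reg semi frame by unfold_locales
  fix u1 u2 v assume "(u1, v) \<in> U" "(u2, v) \<in> U"
  then show "GG z (u1, v) * sqrt \<bar>(\<mu> (u1, v))^2 - (\<nu> (u1, v))^2\<bar> =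
           GG z (u2, v) * sqrt \<bar>(\<mu> (u2, v))^2 - (\<nu> (u2, v))^2\<bar>"
    by (intro u_line_invariant[where S = "{a<..<b}"]) (auto simp: U_def)
qed

end
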